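(* For any integer $p$ there is an infinitely narrow soliton type solution of the Hopf equation $u_t+uu_x=0$ up to $e^{-p}$ in the sense of $\mathbf{R}\langle\varepsilon\rangle$-distributions, i.e. a function $$v(t,x,\varepsilon)=l_0+\Delta l\, \varphi\!\left(\frac{x-ct}{\varepsilon}\right),$$ with $l_0,\Delta l,c$ real numbers, $\Delta l\neq 0$, $\varphi\in\mathcal{S}(\mathbf{R})$, $\int_{-\infty}^{+\infty}\varphi(y)\,dy=1$, such that for every $t\in[0,T]$ and every $\psi\in\mathcal{S}(\mathbf{R})$, $$\int_{-\infty}^{+\infty}\{v_t(t,x,\varepsilon)+v(t,x,\varepsilon)v_x(t,x,\varepsilon)\}\psi(x)\,dx=\sum_{k=p}^{+\infty}\xi_k\varepsilon^k\in\mathbf{R}\langle\varepsilon\rangle .$$ Moreover, $$\frac{c-l_0}{\Delta l}=\frac12\int_{-\infty}^{+\infty}\varphi^2(x)\,dx.$$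
   Context: $\mathbf{R}\langle\varepsilon\rangle$ is the field of formal Laurent series $\sum_{n\ge 0}\xi_{n+k}\varepsilon^{n+k}$ ($k\in\mathbf{Z}$, $\xi_i\in\mathbf{R}$) with the non-Archimedean norm $|x|_\nu=e^{-\nu(x)}$, where $\nu(x)$ is the lowest exponent with nonzero coefficient ($\nu(0)=\infty$). An integral depending on $\varepsilon\in(0,1]$ is regarded as an element of $\mathbf{R}\langle\varepsilon\rangle$ via its expansion in powers of $\varepsilon$; "solution up to $e^{-p}$" means this element has the form $\sum_{k\ge p}\xi_k\varepsilon^k$ (norm at most $e^{-p}$). $T>0$ is a fixed time horizon and $\mathcal{S}(\mathbf{R})$ is the Schwartz space. *)

theory Defs
  imports "HOL-Analysis.Analysis" "HOL-Library.Landau_Symbols"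
begin

definition schwartz :: "(real \<Rightarrow> real) \<Rightarrow> bool" where
  "schwartz f \<longleftrightarrow>
     (\<forall>n x. ((deriv ^^ n) f) differentiable (at x)) \<and>
     (\<forall>m n. bounded (range (\<lambda>x. x ^ m * (deriv ^^ n) f x)))"

text \<open>A function of eps in (0,1] is "a solution up to e^(-p)" in R<eps>:
its asymptotic expansion in powers of eps (as eps -> 0+) has the form
sum_{k >= p} xi_k eps^k.\<close>
definition R_eps_up_to :: "int \<Rightarrow> (real \<Rightarrow> real) \<Rightarrow> bool" where
  "R_eps_up_to p F \<longleftrightarrow>
     (\<exists>\<xi> :: int \<Rightarrow> real. \<forall>N :: int.
        (\<lambda>\<epsilon>. F \<epsilon> - (\<Sum>k\<in>{p..N}. \<xi> k * \<epsilon> powi k))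
          \<in> O[at_right 0](\<lambda>\<epsilon>. \<epsilon> powi (N + 1)))"

definition soliton_v ::
  "real \<Rightarrow> real \<Rightarrow> real \<Rightarrow> (real \<Rightarrow> real) \<Rightarrow> real \<Rightarrow> real \<Rightarrow> real \<Rightarrow> real" where
  "soliton_v l0 dl c \<phi> t x \<epsilon> = l0 + dl * \<phi> ((x - c * t) / \<epsilon>)"

end

theory Submission
  imports Defs "HOL-Real_Asymp.Real_Asymp"
begin

(* Take l0 = 0 and dl = 1. Substituting x = c t + eps y, the pairing of the Hopf residual
   with psi becomes the integral of phi'(y) (phi(y) - c) psi(c t + eps y) dy, and Taylor
   expansion of psi shows that its eps^j-coefficient is a multiple of the j-th moment of
   phi' (phi - c) = (phi^2/2 - c phi)'. So it suffices to find phi for which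
   phi^2 - 2 c phi has vanishing moments of all orders below p. Let H be a small multiple
   of a high derivative of the Gaussian: it is Schwartz, |H| <= 1/8, and its low moments
   vanish. The root phi0 = (1 - sqrt (1 + 4 H)) / 2 of phi0^2 - phi0 = H is again Schwartz,
   and m = int phi0 = int phi0^2 > 0 because int H = 0. Then phi = phi0 / m and c = 1/(2m)
   give int phi = 1, phi^2 - 2 c phi = H / m^2 and c = 1/2 int phi^2. *)

text \<open>Finite-order versions of the Schwartz condition; unlike \<^const>\<open>schwartz\<close> they allow
  closure proofs by induction on the order.\<close>

fun schwartz_upto :: "nat \<Rightarrow> (real \<Rightarrow> real) \<Rightarrow> bool" where
  "schwartz_upto 0 u \<longleftrightarrow> (\<forall>m. \<exists>B. \<forall>x. \<bar>x ^ m * u x\<bar> \<le> B)"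
| "schwartz_upto (Suc n) u \<longleftrightarrow>
     (\<forall>x. u differentiable (at x)) \<and> schwartz_upto 0 u \<and> schwartz_upto n (deriv u)"

fun bounded_upto :: "nat \<Rightarrow> (real \<Rightarrow> real) \<Rightarrow> bool" where
  "bounded_upto 0 u \<longleftrightarrow> (\<exists>B. \<forall>x. \<bar>u x\<bar> \<le> B)"
| "bounded_upto (Suc n) u \<longleftrightarrow>
     (\<forall>x. u differentiable (at x)) \<and> bounded_upto 0 u \<and> bounded_upto n (deriv u)"

lemma schwartz_upto_zero: "schwartz_upto n u \<Longrightarrow> schwartz_upto 0 u"
  by (cases n) auto

lemma bounded_upto_zero: "bounded_upto n u \<Longrightarrow> bounded_upto 0 u"
  by (cases n) auto

lemma schwartz_upto_Suc_imp: "schwartz_upto (Suc n) u \<Longrightarrow> schwartz_upto n u"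
  by (induction n arbitrary: u) auto

lemma bounded_upto_Suc_imp: "bounded_upto (Suc n) u \<Longrightarrow> bounded_upto n u"
  by (induction n arbitrary: u) auto

lemma schwartz_upto_SucD:
  assumes "schwartz_upto (Suc n) u"
  shows "\<forall>x. u differentiable (at x)" "schwartz_upto 0 u" "schwartz_upto n (deriv u)"
    "schwartz_upto n u"
  using assms schwartz_upto_Suc_imp[OF assms] by auto

lemma bounded_upto_SucD:
  assumes "bounded_upto (Suc n) u"
  shows "\<forall>x. u differentiable (at x)" "bounded_upto 0 u" "bounded_upto n (deriv u)"
    "bounded_upto n u"
  using assms bounded_upto_Suc_imp[OF assms] by auto

lemma schwartz_upto_SucI:
  "\<forall>x. u differentiable (at x) \<Longrightarrow> schwartz_upto 0 u \<Longrightarrow> schwartz_upto n (deriv u) \<Longrightarrow>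
    schwartz_upto (Suc n) u"
  by simp

lemma bounded_upto_SucI:
  "\<forall>x. u differentiable (at x) \<Longrightarrow> bounded_upto 0 u \<Longrightarrow> bounded_upto n (deriv u) \<Longrightarrow>
    bounded_upto (Suc n) u"
  by simp

lemma schwartz_upto_0I: "(\<And>m. \<exists>B. \<forall>x. \<bar>x ^ m * u x\<bar> \<le> B) \<Longrightarrow> schwartz_upto 0 u"
  by simp

lemma schwartz_upto_0D: "schwartz_upto 0 u \<Longrightarrow> \<exists>B. \<forall>x. \<bar>x ^ m * u x\<bar> \<le> B"
  by simp

lemma bounded_upto_0I: "\<forall>x. \<bar>u x\<bar> \<le> B \<Longrightarrow> bounded_upto 0 u"
  by auto

lemma bounded_upto_0D: "bounded_upto 0 u \<Longrightarrow> \<exists>B. \<forall>x. \<bar>u x\<bar> \<le> B"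
  by simp

lemma schwartz_upto_imp_bounded_upto: "schwartz_upto n u \<Longrightarrow> bounded_upto n u"
proof (induction n arbitrary: u)
  case 0
  then obtain B where "\<forall>x. \<bar>x ^ 0 * u x\<bar> \<le> B" using schwartz_upto_0D by blast
  then show ?case by (intro bounded_upto_0I[of _ B]) simp
next
  case (Suc n)
  show ?case
  proof (rule bounded_upto_SucI)
    show "\<forall>x. u differentiable (at x)" using schwartz_upto_SucD(1)[OF Suc.prems] .
    show "bounded_upto 0 u" using Suc.IH[OF schwartz_upto_SucD(4)[OF Suc.prems]]
      by (rule bounded_upto_zero)
    show "bounded_upto n (deriv u)" using Suc.IH[OF schwartz_upto_SucD(3)[OF Suc.prems]] .
  qed
qed

lemma DERIV_deriv_everywhere:
  fixes u :: "real \<Rightarrow> real"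
  assumes "\<forall>x. u differentiable (at x)"
  shows "DERIV u x :> deriv u x"
  using assms DERIV_deriv_iff_real_differentiable by blast

lemma schwartz_upto_add: "schwartz_upto n u \<Longrightarrow> schwartz_upto n v \<Longrightarrow> schwartz_upto n (\<lambda>x. u x + v x)"
proof (induction n arbitrary: u v)
  case 0
  show ?case
  proof (rule schwartz_upto_0I)
    fix m
    obtain B1 where B1: "\<forall>x. \<bar>x ^ m * u x\<bar> \<le> B1" using schwartz_upto_0D[OF 0(1)] by blast
    obtain B2 where B2: "\<forall>x. \<bar>x ^ m * v x\<bar> \<le> B2" using schwartz_upto_0D[OF 0(2)] by blast
    from B1 B2 have "\<forall>x. \<bar>x ^ m * (u x + v x)\<bar> \<le> B1 + B2"
      by (metis abs_triangle_ineq add_mono distrib_left order_trans)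
    then show "\<exists>B. \<forall>x. \<bar>x ^ m * (u x + v x)\<bar> \<le> B" by blast
  qed
next
  case (Suc n)
  have du: "\<forall>x. u differentiable (at x)" and dv: "\<forall>x. v differentiable (at x)"
    using schwartz_upto_SucD(1) Suc.prems by blast+
  have e: "deriv (\<lambda>x. u x + v x) = (\<lambda>x. deriv u x + deriv v x)"
    by (rule ext, rule DERIV_imp_deriv, intro DERIV_add DERIV_deriv_everywhere du dv)
  show ?case
  proof (rule schwartz_upto_SucI)
    show "\<forall>x. (\<lambda>x. u x + v x) differentiable (at x)" using du dv by simp
    show "schwartz_upto 0 (\<lambda>x. u x + v x)"
      using Suc.IH[OF schwartz_upto_SucD(4)[OF Suc.prems(1)] schwartz_upto_SucD(4)[OF Suc.prems(2)]]
      by (rule schwartz_upto_zero)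
    show "schwartz_upto n (deriv (\<lambda>x. u x + v x))" unfolding e
      using Suc.IH[OF schwartz_upto_SucD(3)[OF Suc.prems(1)] schwartz_upto_SucD(3)[OF Suc.prems(2)]] .
  qed
qed

lemma bounded_upto_add: "bounded_upto n u \<Longrightarrow> bounded_upto n v \<Longrightarrow> bounded_upto n (\<lambda>x. u x + v x)"
proof (induction n arbitrary: u v)
  case 0
  obtain B1 where B1: "\<forall>x. \<bar>u x\<bar> \<le> B1" using bounded_upto_0D[OF 0(1)] by blast
  obtain B2 where B2: "\<forall>x. \<bar>v x\<bar> \<le> B2" using bounded_upto_0D[OF 0(2)] by blast
  from B1 B2 have "\<forall>x. \<bar>u x + v x\<bar> \<le> B1 + B2"
    by (meson abs_triangle_ineq add_mono order_trans)
  then show ?case by (rule bounded_upto_0I)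
next
  case (Suc n)
  have du: "\<forall>x. u differentiable (at x)" and dv: "\<forall>x. v differentiable (at x)"
    using bounded_upto_SucD(1) Suc.prems by blast+
  have e: "deriv (\<lambda>x. u x + v x) = (\<lambda>x. deriv u x + deriv v x)"
    by (rule ext, rule DERIV_imp_deriv, intro DERIV_add DERIV_deriv_everywhere du dv)
  show ?case
  proof (rule bounded_upto_SucI)
    show "\<forall>x. (\<lambda>x. u x + v x) differentiable (at x)" using du dv by simp
    show "bounded_upto 0 (\<lambda>x. u x + v x)"
      using Suc.IH[OF bounded_upto_SucD(4)[OF Suc.prems(1)] bounded_upto_SucD(4)[OF Suc.prems(2)]]
      by (rule bounded_upto_zero)
    show "bounded_upto n (deriv (\<lambda>x. u x + v x))" unfolding e
      using Suc.IH[OF bounded_upto_SucD(3)[OF Suc.prems(1)] bounded_upto_SucD(3)[OF Suc.prems(2)]] .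
  qed
qed

lemma schwartz_upto_cmult: "schwartz_upto n u \<Longrightarrow> schwartz_upto n (\<lambda>x. c * u x)"
proof (induction n arbitrary: u)
  case 0
  show ?case
  proof (rule schwartz_upto_0I)
    fix m
    obtain B where B: "\<forall>x. \<bar>x ^ m * u x\<bar> \<le> B" using schwartz_upto_0D[OF 0(1)] by blast
    have "\<forall>x. \<bar>x ^ m * (c * u x)\<bar> \<le> \<bar>c\<bar> * B"
    proof
      fix x
      have "\<bar>x ^ m * (c * u x)\<bar> = \<bar>c\<bar> * \<bar>x ^ m * u x\<bar>" by (simp add: abs_mult)
      also have "\<dots> \<le> \<bar>c\<bar> * B" using B by (simp add: mult_left_mono)
      finally show "\<bar>x ^ m * (c * u x)\<bar> \<le> \<bar>c\<bar> * B" .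
    qed
    then show "\<exists>B. \<forall>x. \<bar>x ^ m * (c * u x)\<bar> \<le> B" by blast
  qed
next
  case (Suc n)
  have du: "\<forall>x. u differentiable (at x)" using schwartz_upto_SucD(1) Suc.prems by blast
  have e: "deriv (\<lambda>x. c * u x) = (\<lambda>x. c * deriv u x)"
    by (rule ext, rule DERIV_imp_deriv, intro DERIV_cmult DERIV_deriv_everywhere du)
  show ?case
  proof (rule schwartz_upto_SucI)
    show "\<forall>x. (\<lambda>x. c * u x) differentiable (at x)" using du by simp
    show "schwartz_upto 0 (\<lambda>x. c * u x)" using Suc.IH[OF schwartz_upto_SucD(4)[OF Suc.prems]]
      by (rule schwartz_upto_zero)
    show "schwartz_upto n (deriv (\<lambda>x. c * u x))" unfolding e
      using Suc.IH[OF schwartz_upto_SucD(3)[OF Suc.prems]] .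
  qed
qed

lemma schwartz_upto_mult_bounded_upto:
  "schwartz_upto n u \<Longrightarrow> bounded_upto n v \<Longrightarrow> schwartz_upto n (\<lambda>x. u x * v x)"
proof (induction n arbitrary: u v)
  case 0
  show ?case
  proof (rule schwartz_upto_0I)
    fix m
    obtain B1 where B1: "\<forall>x. \<bar>x ^ m * u x\<bar> \<le> B1" using schwartz_upto_0D[OF 0(1)] by blast
    obtain B2 where B2: "\<forall>x. \<bar>v x\<bar> \<le> B2" using bounded_upto_0D[OF 0(2)] by blast
    have "\<forall>x. \<bar>x ^ m * (u x * v x)\<bar> \<le> B1 * B2"
    proof
      fix x
      have "\<bar>x ^ m * (u x * v x)\<bar> = \<bar>x ^ m * u x\<bar> * \<bar>v x\<bar>" by (simp add: abs_mult)
      also have "\<dots> \<le> B1 * B2" using B1 B2 by (meson abs_ge_zero mult_mono order_trans)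
      finally show "\<bar>x ^ m * (u x * v x)\<bar> \<le> B1 * B2" .
    qed
    then show "\<exists>B. \<forall>x. \<bar>x ^ m * (u x * v x)\<bar> \<le> B" by blast
  qed
next
  case (Suc n)
  have du: "\<forall>x. u differentiable (at x)" using schwartz_upto_SucD(1) Suc.prems(1) by blast
  have dv: "\<forall>x. v differentiable (at x)" using bounded_upto_SucD(1) Suc.prems(2) by blast
  have e: "deriv (\<lambda>x. u x * v x) = (\<lambda>x. deriv u x * v x + u x * deriv v x)"
  proof (rule ext, rule DERIV_imp_deriv)
    fix x show "DERIV (\<lambda>x. u x * v x) x :> deriv u x * v x + u x * deriv v x"
      using DERIV_mult[OF DERIV_deriv_everywhere[OF du] DERIV_deriv_everywhere[OF dv], of x]
      by (simp add: mult.commute)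
  qed
  have 1: "schwartz_upto n (\<lambda>x. deriv u x * v x)"
    using Suc.IH[OF schwartz_upto_SucD(3)[OF Suc.prems(1)] bounded_upto_SucD(4)[OF Suc.prems(2)]] .
  have 2: "schwartz_upto n (\<lambda>x. u x * deriv v x)"
    using Suc.IH[OF schwartz_upto_SucD(4)[OF Suc.prems(1)] bounded_upto_SucD(3)[OF Suc.prems(2)]] .
  show ?case
  proof (rule schwartz_upto_SucI)
    show "\<forall>x. (\<lambda>x. u x * v x) differentiable (at x)" using du dv by simp
    show "schwartz_upto 0 (\<lambda>x. u x * v x)"
      using Suc.IH[OF schwartz_upto_SucD(4)[OF Suc.prems(1)] bounded_upto_SucD(4)[OF Suc.prems(2)]]
      by (rule schwartz_upto_zero)
    show "schwartz_upto n (deriv (\<lambda>x. u x * v x))" unfolding e using schwartz_upto_add[OF 1 2] .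
  qed
qed

lemma bounded_upto_mult: "bounded_upto n u \<Longrightarrow> bounded_upto n v \<Longrightarrow> bounded_upto n (\<lambda>x. u x * v x)"
proof (induction n arbitrary: u v)
  case 0
  obtain B1 where B1: "\<forall>x. \<bar>u x\<bar> \<le> B1" using bounded_upto_0D[OF 0(1)] by blast
  obtain B2 where B2: "\<forall>x. \<bar>v x\<bar> \<le> B2" using bounded_upto_0D[OF 0(2)] by blast
  have "\<forall>x. \<bar>u x * v x\<bar> \<le> B1 * B2"
    using B1 B2 by (metis abs_ge_zero abs_mult mult_mono order_trans)
  then show ?case by (rule bounded_upto_0I)
next
  case (Suc n)
  have du: "\<forall>x. u differentiable (at x)" using bounded_upto_SucD(1) Suc.prems(1) by blast
  have dv: "\<forall>x. v differentiable (at x)" using bounded_upto_SucD(1) Suc.prems(2) by blast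
  have e: "deriv (\<lambda>x. u x * v x) = (\<lambda>x. deriv u x * v x + u x * deriv v x)"
  proof (rule ext, rule DERIV_imp_deriv)
    fix x show "DERIV (\<lambda>x. u x * v x) x :> deriv u x * v x + u x * deriv v x"
      using DERIV_mult[OF DERIV_deriv_everywhere[OF du] DERIV_deriv_everywhere[OF dv], of x]
      by (simp add: mult.commute)
  qed
  have 1: "bounded_upto n (\<lambda>x. deriv u x * v x)"
    using Suc.IH[OF bounded_upto_SucD(3)[OF Suc.prems(1)] bounded_upto_SucD(4)[OF Suc.prems(2)]] .
  have 2: "bounded_upto n (\<lambda>x. u x * deriv v x)"
    using Suc.IH[OF bounded_upto_SucD(4)[OF Suc.prems(1)] bounded_upto_SucD(3)[OF Suc.prems(2)]] .
  show ?case
  proof (rule bounded_upto_SucI)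
    show "\<forall>x. (\<lambda>x. u x * v x) differentiable (at x)" using du dv by simp
    show "bounded_upto 0 (\<lambda>x. u x * v x)"
      using Suc.IH[OF bounded_upto_SucD(4)[OF Suc.prems(1)] bounded_upto_SucD(4)[OF Suc.prems(2)]]
      by (rule bounded_upto_zero)
    show "bounded_upto n (deriv (\<lambda>x. u x * v x))" unfolding e using bounded_upto_add[OF 1 2] .
  qed
qed

lemma schwartz_upto_xmult: "schwartz_upto n u \<Longrightarrow> schwartz_upto n (\<lambda>x. x * u x)"
proof (induction n arbitrary: u)
  case 0
  show ?case
  proof (rule schwartz_upto_0I)
    fix m
    obtain B where B: "\<forall>x. \<bar>x ^ Suc m * u x\<bar> \<le> B" using schwartz_upto_0D[OF 0(1)] by blast
    then have "\<forall>x. \<bar>x ^ m * (x * u x)\<bar> \<le> B" by (simp add: mult.assoc mult.commute mult.left_commute)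
    then show "\<exists>B. \<forall>x. \<bar>x ^ m * (x * u x)\<bar> \<le> B" by blast
  qed
next
  case (Suc n)
  have du: "\<forall>x. u differentiable (at x)" using schwartz_upto_SucD(1) Suc.prems by blast
  have e: "deriv (\<lambda>x. x * u x) = (\<lambda>x. u x + x * deriv u x)"
  proof (rule ext, rule DERIV_imp_deriv)
    fix x show "DERIV (\<lambda>x. x * u x) x :> u x + x * deriv u x"
      using DERIV_mult[OF DERIV_ident DERIV_deriv_everywhere[OF du], of x]
      by (simp add: mult.commute)
  qed
  show ?case
  proof (rule schwartz_upto_SucI)
    show "\<forall>x. (\<lambda>x. x * u x) differentiable (at x)" using du by simp
    show "schwartz_upto 0 (\<lambda>x. x * u x)" using Suc.IH[OF schwartz_upto_SucD(4)[OF Suc.prems]]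
      by (rule schwartz_upto_zero)
    show "schwartz_upto n (deriv (\<lambda>x. x * u x))" unfolding e
      using schwartz_upto_add[OF schwartz_upto_SucD(4)[OF Suc.prems] Suc.IH[OF schwartz_upto_SucD(3)[OF Suc.prems]]] .
  qed
qed

lemma schwartz_upto_funpow_deriv: "schwartz_upto (k + n) u \<Longrightarrow> schwartz_upto n ((deriv ^^ k) u)"
proof (induction k arbitrary: u)
  case 0 then show ?case by simp
next
  case (Suc k)
  then have "schwartz_upto (k + n) (deriv u)" by simp
  then show ?case using Suc.IH by (simp add: funpow_Suc_right del: funpow.simps)
qed

lemma schwartz_if_schwartz_upto_all: "(\<forall>n. schwartz_upto n u) \<Longrightarrow> schwartz u"
  unfolding schwartz_def
proof safe
  fix n x assume a: "\<forall>n. schwartz_upto n u"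
  have "schwartz_upto (Suc 0) ((deriv ^^ n) u)" using a schwartz_upto_funpow_deriv[of n "Suc 0" u]
    by simp
  then show "(deriv ^^ n) u differentiable at x" by simp
next
  fix m n assume a: "\<forall>n. schwartz_upto n u"
  have "schwartz_upto 0 ((deriv ^^ n) u)" using a schwartz_upto_funpow_deriv[of n 0 u] by simp
  then obtain B where "\<forall>x. \<bar>x ^ m * (deriv ^^ n) u x\<bar> \<le> B" using schwartz_upto_0D by blast
  then show "bounded (range (\<lambda>x. x ^ m * (deriv ^^ n) u x))"
    unfolding bounded_iff by auto
qed

lemma abs_power_le_one_plus_square_power: "\<bar>x::real\<bar> ^ m \<le> 1 + (x ^ 2) ^ m"
proof (cases "\<bar>x\<bar> \<le> 1")
  case True
  then have "\<bar>x\<bar> ^ m \<le> 1" by (simp add: power_le_one)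
  moreover have "0 \<le> (x ^ 2) ^ m" by simp
  ultimately show ?thesis by linarith
next
  case False
  then have "\<bar>x\<bar> ^ m \<le> \<bar>x\<bar> ^ (2 * m)" by (intro power_increasing) auto
  also have "\<dots> = (x ^ 2) ^ m" by (simp add: power_mult power2_abs)
  finally show ?thesis by simp
qed

lemma power_le_exp:
  assumes t: "0 \<le> (t::real)"
  shows "t ^ m \<le> real m ^ m * exp t"
proof (cases "m = 0")
  case True then show ?thesis using t by simp
next
  case False
  have "(1 + t / real m) ^ m \<le> exp t"
    by (rule exp_ge_one_plus_x_over_n_power_n) (use t False in auto)
  moreover have "(t / real m) ^ m \<le> (1 + t / real m) ^ m"
    by (rule power_mono) (use t in auto)
  ultimately have "(t / real m) ^ m \<le> exp t" by linarith
  then have "t ^ m / real m ^ m \<le> exp t" by (simp add: power_divide)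
  then show ?thesis using False by (simp add: field_simps)
qed

lemma gaussian_moment_bounded: "\<exists>B. \<forall>x::real. \<bar>x ^ m * exp (- (x ^ 2))\<bar> \<le> B"
proof (intro exI allI)
  fix x :: real
  have "\<bar>x ^ m * exp (- (x ^ 2))\<bar> = \<bar>x\<bar> ^ m * exp (- (x ^ 2))" by (simp add: abs_mult power_abs)
  also have "\<dots> \<le> (1 + (x ^ 2) ^ m) * exp (- (x ^ 2))"
    by (rule mult_right_mono) (auto simp: abs_power_le_one_plus_square_power)
  also have "\<dots> = exp (- (x ^ 2)) + (x ^ 2) ^ m * exp (- (x ^ 2))" by (simp add: algebra_simps)
  also have "\<dots> \<le> 1 + real m ^ m"
  proof -
    have "exp (- (x ^ 2)) \<le> 1" by simp
    moreover have "(x ^ 2) ^ m * exp (- (x ^ 2)) \<le> real m ^ m * exp (x ^ 2) * exp (- (x ^ 2))"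
      by (rule mult_right_mono) (auto simp: power_le_exp)
    moreover have "real m ^ m * exp (x ^ 2) * exp (- (x ^ 2)) = real m ^ m"
      by (simp add: exp_minus field_simps)
    ultimately show ?thesis by linarith
  qed
  finally show "\<bar>x ^ m * exp (- (x ^ 2))\<bar> \<le> 1 + real m ^ m" .
qed

lemma schwartz_upto_gaussian: "schwartz_upto n (\<lambda>x. exp (- (x ^ 2)))"
proof (induction n)
  case 0 then show ?case using gaussian_moment_bounded by simp
next
  case (Suc n)
  have gD: "DERIV (\<lambda>x. exp (- (x ^ 2))) x :> (-2) * (x * exp (- (x ^ 2)))" for x :: real
  proof -
    have "DERIV (\<lambda>x. - (x ^ 2)) x :> - (real 2 * x ^ (2 - 1))"
      using DERIV_minus[OF DERIV_pow[of 2 x]] by simp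
    from DERIV_fun_exp[OF this]
    show "DERIV (\<lambda>x. exp (- (x ^ 2))) x :> (-2) * (x * exp (- (x ^ 2)))"
      by (simp add: algebra_simps)
  qed
  have e: "deriv (\<lambda>x::real. exp (- (x ^ 2))) = (\<lambda>x. (-2) * (x * exp (- (x ^ 2))))"
    by (rule ext, rule DERIV_imp_deriv, rule gD)
  have "schwartz_upto n (deriv (\<lambda>x. exp (- (x ^ 2))))" unfolding e
    by (intro schwartz_upto_cmult schwartz_upto_xmult Suc.IH)
  moreover have "\<forall>x::real. (\<lambda>x. exp (- (x ^ 2))) differentiable (at x)"
    using gD real_differentiable_def by blast
  moreover have "schwartz_upto 0 (\<lambda>x. exp (- ((x::real) ^ 2)))" using gaussian_moment_bounded
    by simp
  ultimately show ?case by (intro schwartz_upto_SucI)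
qed

lemma powr_le_two_powr_abs:
  fixes b e :: real
  assumes "1/2 \<le> b" "b \<le> 3/2"
  shows "b powr e \<le> 2 powr \<bar>e\<bar>"
proof (cases "0 \<le> e")
  case True
  have "b powr e \<le> 2 powr e" by (rule powr_mono2) (use True assms in auto)
  then show ?thesis using True by simp
next
  case False
  have "b powr e = (1 / b) powr (- e)"
    using assms by (simp add: powr_minus_divide powr_divide)
  also have "\<dots> \<le> 2 powr (- e)" by (rule powr_mono2) (use False assms in \<open>auto simp: field_simps\<close>)
  finally show ?thesis using False by simp
qed

lemma bounded_upto_powr_comp:
  assumes H: "\<forall>n. schwartz_upto n H" and Hb: "\<forall>x. \<bar>H x\<bar> \<le> 1/8"
  shows "bounded_upto n (\<lambda>x. C * (1 + 4 * H x) powr e)"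
proof (induction n arbitrary: C e)
  case 0
  have "\<forall>x. \<bar>C * (1 + 4 * H x) powr e\<bar> \<le> \<bar>C\<bar> * 2 powr \<bar>e\<bar>"
  proof
    fix x
    have b: "1/2 \<le> 1 + 4 * H x" "1 + 4 * H x \<le> 3/2" using Hb[rule_format, of x] by auto
    have "\<bar>C * (1 + 4 * H x) powr e\<bar> = \<bar>C\<bar> * (1 + 4 * H x) powr e" by (simp add: abs_mult)
    also have "\<dots> \<le> \<bar>C\<bar> * 2 powr \<bar>e\<bar>"
      by (rule mult_left_mono) (use powr_le_two_powr_abs[OF b] in auto)
    finally show "\<bar>C * (1 + 4 * H x) powr e\<bar> \<le> \<bar>C\<bar> * 2 powr \<bar>e\<bar>" .
  qed
  then show ?case by (simp only: bounded_upto.simps) blast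
next
  case (Suc n)
  have dH: "\<forall>x. H differentiable (at x)" using H[rule_format, of 1] by simp
  have pos: "0 < 1 + 4 * H x" for x using Hb[rule_format, of x] by linarith
  have D: "DERIV (\<lambda>x. C * (1 + 4 * H x) powr e) x :> (4 * C * e * (1 + 4 * H x) powr (e - 1)) * deriv H x" for x
  proof -
    have "DERIV (\<lambda>x. 1 + 4 * H x) x :> 0 + 4 * deriv H x"
      by (intro DERIV_add DERIV_const DERIV_cmult DERIV_deriv_everywhere dH)
    from DERIV_cmult[OF DERIV_fun_powr[where r=e, OF this pos], of C]
    show ?thesis by (simp add: algebra_simps)
  qed
  have e: "deriv (\<lambda>x. C * (1 + 4 * H x) powr e) = (\<lambda>x. (4 * C * e * (1 + 4 * H x) powr (e - 1)) * deriv H x)"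
    by (rule ext, rule DERIV_imp_deriv, rule D)
  have "schwartz_upto n (deriv H)" using H[rule_format, of "Suc n"] by simp
  then have "bounded_upto n (deriv H)" by (rule schwartz_upto_imp_bounded_upto)
  then have "bounded_upto n (deriv (\<lambda>x. C * (1 + 4 * H x) powr e))" unfolding e
    by (intro bounded_upto_mult Suc.IH)
  moreover have "bounded_upto 0 (\<lambda>x. C * (1 + 4 * H x) powr e)" using Suc.IH bounded_upto_zero
    by blast
  moreover have "\<forall>x. (\<lambda>x. C * (1 + 4 * H x) powr e) differentiable (at x)"
    using D real_differentiable_def by blast
  ultimately show ?case by (intro bounded_upto_SucI)
qed

lemma abs_quadratic_root_le:
  assumes "-1/4 \<le> (z::real)"
  shows "\<bar>(1 - sqrt (1 + 4 * z)) / 2\<bar> \<le> 2 * \<bar>z\<bar>"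
proof -
  define s where "s = sqrt (1 + 4 * z)"
  have s0: "0 \<le> s" using assms by (simp add: s_def)
  have ss: "s * s = 1 + 4 * z" using assms by (simp add: s_def)
  have e: "(1 - s) * (1 + s) = - 4 * z" using ss by (simp add: algebra_simps)
  have "\<bar>1 - s\<bar> * (1 + s) = \<bar>(1 - s) * (1 + s)\<bar>" using s0 by (simp add: abs_mult)
  also have "\<dots> = 4 * \<bar>z\<bar>" unfolding e by (simp add: abs_mult)
  finally have e2: "\<bar>1 - s\<bar> * (1 + s) = 4 * \<bar>z\<bar>" .
  have "\<bar>1 - s\<bar> * 1 \<le> \<bar>1 - s\<bar> * (1 + s)" by (rule mult_left_mono) (use s0 in auto)
  then have "\<bar>1 - s\<bar> \<le> 4 * \<bar>z\<bar>" using e2 by simp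
  then show ?thesis unfolding s_def[symmetric] by simp
qed

lemma integrable_inverse_one_plus_square: "integrable lborel (\<lambda>x::real. inverse (1 + x\<^sup>2))"
proof -
  have "set_integrable lborel (einterval (-\<infinity>) \<infinity>) (\<lambda>x::real. inverse (1 + x\<^sup>2))"
  proof (rule interval_integral_FTC_nonneg(1)[where F = arctan and A = "- (pi/2)" and B = "pi/2"])
    show "(- \<infinity>::ereal) < \<infinity>" by simp
    show "\<And>x. - \<infinity> < ereal x \<Longrightarrow> ereal x < \<infinity> \<Longrightarrow> DERIV arctan x :> inverse (1 + x\<^sup>2)"
      by (rule DERIV_arctan)
    show "isCont (\<lambda>x::real. inverse (1 + x\<^sup>2)) x" for x
    proof -
      have "1 + x\<^sup>2 \<noteq> 0" using zero_le_power2[of x] by linarith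
      then show ?thesis by (intro continuous_intros)
    qed
    show "AE x in lborel. - \<infinity> < ereal x \<longrightarrow> ereal x < \<infinity> \<longrightarrow> 0 \<le> inverse (1 + x\<^sup>2)"
      by simp
    show "((arctan \<circ> real_of_ereal) \<longlongrightarrow> - (pi / 2)) (at_right (- \<infinity>))"
      unfolding ereal_tendsto_simps by (rule tendsto_arctan_at_bot)
    show "((arctan \<circ> real_of_ereal) \<longlongrightarrow> pi / 2) (at_left \<infinity>)"
      unfolding ereal_tendsto_simps by (rule tendsto_arctan_at_top)
  qed
  then show ?thesis by (simp add: set_integrable_def)
qed

lemma schwartz_upto_continuous: "schwartz_upto (Suc 0) u \<Longrightarrow> continuous_on UNIV u"
  by (intro continuous_at_imp_continuous_on ballI differentiable_imp_continuous_within) (use schwartz_upto_SucD(1) in blast)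

lemma integrable_continuous_dominated:
  fixes g h :: "real \<Rightarrow> real"
  assumes "integrable lborel h" "continuous_on UNIV g" "\<And>y. \<bar>g y\<bar> \<le> C * \<bar>h y\<bar>"
  shows "integrable lborel g"
proof -
  have i: "integrable lborel (\<lambda>y. C * h y)" using assms(1) by simp
  have m: "g \<in> borel_measurable lborel" using assms(2) borel_measurable_continuous_onI by simp
  have a: "AE x in lborel. norm (g x) \<le> norm (C * h x)"
  proof (rule AE_I2)
    fix x
    have "C * \<bar>h x\<bar> \<le> \<bar>C\<bar> * \<bar>h x\<bar>" by (rule mult_right_mono) auto
    then show "norm (g x) \<le> norm (C * h x)" using assms(3)[of x] by (simp add: abs_mult)
  qed
  show ?thesis using Bochner_Integration.integrable_bound[OF i m a] .
qed

lemma schwartz_upto_0_moment_le: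
  assumes "schwartz_upto 0 u"
  shows "\<exists>C. \<forall>y. \<bar>y ^ k * u y\<bar> \<le> C * \<bar>inverse (1 + y\<^sup>2)\<bar>"
proof -
  obtain B0 where B0: "\<forall>y. \<bar>y ^ k * u y\<bar> \<le> B0" using schwartz_upto_0D[OF assms] by blast
  obtain B2 where B2: "\<forall>y. \<bar>y ^ (k + 2) * u y\<bar> \<le> B2" using schwartz_upto_0D[OF assms] by blast
  have "\<bar>y ^ k * u y\<bar> \<le> (B0 + B2) * \<bar>inverse (1 + y\<^sup>2)\<bar>" for y
  proof -
    have p: "0 < 1 + y\<^sup>2" using zero_le_power2[of y] by linarith
    have "\<bar>y ^ (k + 2) * u y\<bar> = y\<^sup>2 * \<bar>y ^ k * u y\<bar>"
      by (simp add: power_add abs_mult power2_eq_square)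
    then have "(1 + y\<^sup>2) * \<bar>y ^ k * u y\<bar> = \<bar>y ^ k * u y\<bar> + \<bar>y ^ (k + 2) * u y\<bar>"
      by (simp add: distrib_right)
    also have "\<dots> \<le> B0 + B2" using B0 B2 by (meson add_mono)
    finally have "(1 + y\<^sup>2) * \<bar>y ^ k * u y\<bar> \<le> B0 + B2" .
    then show ?thesis using p by (simp add: field_simps)
  qed
  then show ?thesis by blast
qed

lemma schwartz_upto_integrable_moment:
  assumes "schwartz_upto (Suc 0) u"
  shows "integrable lborel (\<lambda>y. y ^ k * u y)"
proof -
  obtain C where C: "\<forall>y. \<bar>y ^ k * u y\<bar> \<le> C * \<bar>inverse (1 + y\<^sup>2)\<bar>"
    using schwartz_upto_0_moment_le[OF schwartz_upto_SucD(2)[OF assms]] by blast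
  have "continuous_on UNIV u" using assms by (rule schwartz_upto_continuous)
  then have "continuous_on UNIV (\<lambda>y. y ^ k * u y)" by (intro continuous_intros)
  then show ?thesis
    by (rule integrable_continuous_dominated[OF integrable_inverse_one_plus_square _ C[rule_format]])
qed

lemma schwartz_upto_integrable:
  assumes "schwartz_upto (Suc 0) u"
  shows "integrable lborel u"
  using schwartz_upto_integrable_moment[OF assms, of 0] by simp

lemma schwartz_upto_moment_tendsto_0:
  assumes "schwartz_upto 0 u"
  shows "((\<lambda>y. y ^ k * u y) \<longlongrightarrow> 0) at_top" "((\<lambda>y. y ^ k * u y) \<longlongrightarrow> 0) at_bot"
proof -
  obtain C where C: "\<forall>y. \<bar>y ^ k * u y\<bar> \<le> C * \<bar>inverse (1 + y\<^sup>2)\<bar>"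
    using schwartz_upto_0_moment_le[OF assms] by blast
  have ev: "eventually (\<lambda>y. norm (y ^ k * u y) \<le> C * \<bar>inverse (1 + y\<^sup>2)\<bar>) F" for F
    by (rule always_eventually, rule allI) (use C in \<open>simp only: real_norm_def\<close>)
  have l1: "((\<lambda>y::real. inverse (1 + y\<^sup>2)) \<longlongrightarrow> 0) at_top" by real_asymp
  have l2: "((\<lambda>y::real. inverse (1 + y\<^sup>2)) \<longlongrightarrow> 0) at_bot" by real_asymp
  have l1': "((\<lambda>y::real. C * \<bar>inverse (1 + y\<^sup>2)\<bar>) \<longlongrightarrow> 0) at_top"
    using tendsto_mult[OF tendsto_const[of C] tendsto_rabs[OF l1]] by simp
  have l2': "((\<lambda>y::real. C * \<bar>inverse (1 + y\<^sup>2)\<bar>) \<longlongrightarrow> 0) at_bot"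
    using tendsto_mult[OF tendsto_const[of C] tendsto_rabs[OF l2]] by simp
  show "((\<lambda>y. y ^ k * u y) \<longlongrightarrow> 0) at_top" by (rule Lim_null_comparison[OF ev l1'])
  show "((\<lambda>y. y ^ k * u y) \<longlongrightarrow> 0) at_bot" by (rule Lim_null_comparison[OF ev l2'])
qed

lemma integral_deriv_eq_0_if_vanishing:
  fixes w w' :: "real \<Rightarrow> real"
  assumes "\<And>x. DERIV w x :> w' x" "continuous_on UNIV w'" "integrable lborel w'"
    "(w \<longlongrightarrow> 0) at_top" "(w \<longlongrightarrow> 0) at_bot"
  shows "integral\<^sup>L lborel w' = 0"
proof -
  have "(LBINT x=-\<infinity>..\<infinity>. w' x) = 0 - 0"
  proof (rule interval_integral_FTC_integrable[where F = w])
    show "(- \<infinity>::ereal) < \<infinity>" by simp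
    show "\<And>x. - \<infinity> < ereal x \<Longrightarrow> ereal x < \<infinity> \<Longrightarrow> (w has_vector_derivative w' x) (at x)"
      using assms(1) has_real_derivative_iff_has_vector_derivative by blast
    show "\<And>x. - \<infinity> < ereal x \<Longrightarrow> ereal x < \<infinity> \<Longrightarrow> isCont w' x"
      using assms(2) by (simp add: continuous_on_eq_continuous_at)
    show "set_integrable lborel (einterval (- \<infinity>) \<infinity>) w'"
      using assms(3) by (simp add: set_integrable_def)
    show "((w \<circ> real_of_ereal) \<longlongrightarrow> 0) (at_right (- \<infinity>))"
      unfolding ereal_tendsto_simps by (rule assms(5))
    show "((w \<circ> real_of_ereal) \<longlongrightarrow> 0) (at_left \<infinity>)"
      unfolding ereal_tendsto_simps by (rule assms(4))
  qed
  then show ?thesis by (simp add: interval_lebesgue_integral_def set_lebesgue_integral_def)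
qed

lemma integral_moment_deriv:
  assumes u: "schwartz_upto (Suc (Suc 0)) u"
  shows "integral\<^sup>L lborel (\<lambda>y. y ^ Suc k * deriv u y) = - real (Suc k) * integral\<^sup>L lborel (\<lambda>y. y ^ k * u y)"
proof -
  have u1: "schwartz_upto (Suc 0) u" using schwartz_upto_SucD(4)[OF u] .
  have du1: "schwartz_upto (Suc 0) (deriv u)" using schwartz_upto_SucD(3)[OF u] .
  have dif: "\<forall>x. u differentiable (at x)" using schwartz_upto_SucD(1)[OF u] .
  define w' where "w' y = real (Suc k) * (y ^ k * u y) + y ^ Suc k * deriv u y" for y
  have D: "DERIV (\<lambda>y. y ^ Suc k * u y) x :> w' x" for x
  proof -
    have "DERIV (\<lambda>y. y ^ Suc k * u y) x :> real (Suc k) * x ^ (Suc k - 1) * u x + deriv u x * x ^ Suc k"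
      using DERIV_mult[OF DERIV_pow[of "Suc k" x] DERIV_deriv_everywhere[OF dif]] by simp
    then show ?thesis unfolding w'_def by (simp add: algebra_simps)
  qed
  have i1: "integrable lborel (\<lambda>y. y ^ k * u y)" using schwartz_upto_integrable_moment[OF u1] .
  have i2: "integrable lborel (\<lambda>y. y ^ Suc k * deriv u y)"
    using schwartz_upto_integrable_moment[OF du1] .
  have iw: "integrable lborel w'" unfolding w'_def using i1 i2 by simp
  have cw: "continuous_on UNIV w'" unfolding w'_def
    using schwartz_upto_continuous[OF u1] schwartz_upto_continuous[OF du1]
    by (intro continuous_intros) auto
  have "integral\<^sup>L lborel w' = 0"
    by (rule integral_deriv_eq_0_if_vanishing[OF D cw iw schwartz_upto_moment_tendsto_0[OF schwartz_upto_SucD(2)[OF u1]]])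
  moreover have "integral\<^sup>L lborel w' = real (Suc k) * integral\<^sup>L lborel (\<lambda>y. y ^ k * u y) + integral\<^sup>L lborel (\<lambda>y. y ^ Suc k * deriv u y)"
    unfolding w'_def using i1 i2 by simp
  ultimately have "integral\<^sup>L lborel (\<lambda>y. y ^ Suc k * deriv u y) = - (real (Suc k) * integral\<^sup>L lborel (\<lambda>y. y ^ k * u y))"
    by linarith
  then show ?thesis by (simp only: mult_minus_left)
qed

lemma integral_deriv_eq_0:
  assumes u: "schwartz_upto (Suc (Suc 0)) u"
  shows "integral\<^sup>L lborel (deriv u) = 0"
proof -
  have u1: "schwartz_upto (Suc 0) u" using schwartz_upto_SucD(4)[OF u] .
  have du1: "schwartz_upto (Suc 0) (deriv u)" using schwartz_upto_SucD(3)[OF u] .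
  have dif: "\<forall>x. u differentiable (at x)" using schwartz_upto_SucD(1)[OF u] .
  show ?thesis
    using integral_deriv_eq_0_if_vanishing[OF DERIV_deriv_everywhere[OF dif]
        schwartz_upto_continuous[OF du1] schwartz_upto_integrable[OF du1]]
      schwartz_upto_moment_tendsto_0[OF schwartz_upto_SucD(2)[OF u1], of 0]
    by simp
qed

lemma moments_deriv_eq_0:
  assumes u: "schwartz_upto (Suc (Suc 0)) u"
    and moments: "\<And>k. k < N \<Longrightarrow> integral\<^sup>L lborel (\<lambda>y. y ^ k * u y) = 0"
    and "j \<le> N"
  shows "integral\<^sup>L lborel (\<lambda>y. y ^ j * deriv u y) = 0"
proof (cases j)
  case 0
  then show ?thesis using integral_deriv_eq_0[OF u] by simp
next
  case (Suc k)
  then show ?thesis using integral_moment_deriv[OF u, of k] moments[of k] \<open>j \<le> N\<close> by simp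
qed

lemma moments_funpow_deriv_eq_0:
  assumes "\<forall>n. schwartz_upto n \<theta>"
  shows "k < j \<Longrightarrow> integral\<^sup>L lborel (\<lambda>y. y ^ k * (deriv ^^ j) \<theta> y) = 0"
proof (induction j arbitrary: k)
  case 0
  then show ?case by simp
next
  case (Suc j)
  have "schwartz_upto (Suc (Suc 0)) ((deriv ^^ j) \<theta>)"
    using assms schwartz_upto_funpow_deriv[of j "Suc (Suc 0)" \<theta>] by simp
  from moments_deriv_eq_0[OF this Suc.IH] Suc.prems show ?case by simp
qed

lemma integral_pos_if_continuous:
  fixes g :: "real \<Rightarrow> real"
  assumes c: "continuous_on UNIV g" and nn: "\<And>x. 0 \<le> g x" and p: "0 < g y0"
    and i: "integrable lborel g"
  shows "0 < integral\<^sup>L lborel g"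
proof -
  have cc: "\<forall>e>0. \<exists>d>0. \<forall>y. dist y y0 < d \<longrightarrow> dist (g y) (g y0) < e"
    using c unfolding continuous_on_iff by blast
  have "g y0 / 2 > 0" using p by simp
  then obtain d where d: "d > 0" "\<And>y. dist y y0 < d \<Longrightarrow> dist (g y) (g y0) < g y0 / 2"
    using cc by blast
  define A where "A = {y0 - d/2 .. y0 + d/2}"
  have le: "indicator A x * (g y0 / 2) \<le> g x" for x
  proof (cases "x \<in> A")
    case True
    then have "dist x y0 < d" using d(1) by (auto simp: A_def dist_real_def)
    then have "\<bar>g x - g y0\<bar> < g y0 / 2" using d(2) by (simp add: dist_real_def)
    then have "g y0 / 2 \<le> g x" by linarith
    then show ?thesis using True by simp
  next
    case False then show ?thesis using nn by simp
  qed
  have iA: "integrable lborel (\<lambda>x. indicator A x * (g y0 / 2))"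
    unfolding A_def using d(1) by (intro integrable_mult_left integrable_real_indicator) auto
  have "integral\<^sup>L lborel (\<lambda>x. indicator A x * (g y0 / 2)) \<le> integral\<^sup>L lborel g"
    by (rule integral_mono[OF iA i le])
  moreover have "integral\<^sup>L lborel (\<lambda>x. indicator A x * (g y0 / 2)) = d * (g y0 / 2)"
    unfolding A_def using d(1) by simp
  moreover have "0 < d * (g y0 / 2)" using d(1) p by simp
  ultimately show ?thesis by linarith
qed

lemma schwartz_DERIV_funpow:
  assumes "schwartz \<psi>"
  shows "DERIV ((deriv ^^ m) \<psi>) x :> (deriv ^^ (Suc m)) \<psi> x"
proof -
  have "(deriv ^^ m) \<psi> differentiable (at x)" using assms unfolding schwartz_def by blast
  then obtain D where D: "DERIV ((deriv ^^ m) \<psi>) x :> D" using real_differentiable_def by blast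
  then have "deriv ((deriv ^^ m) \<psi>) x = D" by (rule DERIV_imp_deriv)
  then show ?thesis using D by simp
qed

lemma schwartz_funpow_bounded:
  assumes "schwartz \<psi>"
  shows "\<exists>B. \<forall>x. \<bar>(deriv ^^ m) \<psi> x\<bar> \<le> B"
proof -
  have "bounded (range (\<lambda>x. x ^ 0 * (deriv ^^ m) \<psi> x))" using assms unfolding schwartz_def by blast
  then show ?thesis unfolding bounded_iff by simp
qed

lemma schwartz_continuous:
  assumes "schwartz \<psi>"
  shows "continuous_on UNIV \<psi>"
proof -
  have "\<forall>x. \<psi> differentiable (at x)" using assms unfolding schwartz_def
    by (metis funpow_0)
  then show ?thesis
    by (intro continuous_at_imp_continuous_on ballI differentiable_imp_continuous_within) blast
qed

lemma sum_power_zero: "M \<noteq> 0 \<Longrightarrow> (\<Sum>j<M. a j * (0::real) ^ j) = a 0"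
proof -
  assume "M \<noteq> 0"
  then obtain M' where M: "M = Suc M'" using not0_implies_Suc by blast
  show ?thesis unfolding M by (simp add: sum.lessThan_Suc_shift del: sum.lessThan_Suc)
qed

lemma taylor_remainder_bound:
  assumes \<psi>: "schwartz \<psi>" and B: "\<forall>x. \<bar>(deriv ^^ M) \<psi> x\<bar> \<le> B"
  shows "\<bar>\<psi> (x0 + z) - (\<Sum>j<M. (deriv ^^ j) \<psi> x0 / fact j * z ^ j)\<bar> \<le> B / fact M * \<bar>z\<bar> ^ M"
proof (cases "M = 0")
  case True then show ?thesis using B by simp
next
  case M0: False
  show ?thesis
  proof (cases "z = 0")
    case True
    have "(\<Sum>j<M. (deriv ^^ j) \<psi> x0 / fact j * z ^ j) = \<psi> x0"
      unfolding True using sum_power_zero[OF M0, of "\<lambda>j. (deriv ^^ j) \<psi> x0 / fact j"] by simp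
    moreover have "0 \<le> B" using B by (meson abs_ge_zero order_trans)
    ultimately show ?thesis using True M0 by simp
  next
    case False
    have "\<exists>t. (if x0 + z < x0 then x0 + z < t \<and> t < x0 else x0 < t \<and> t < x0 + z) \<and>
      \<psi> (x0 + z) = (\<Sum>m<M. ((deriv ^^ m) \<psi> x0 / fact m) * (x0 + z - x0) ^ m) + ((deriv ^^ M) \<psi> t / fact M) * (x0 + z - x0) ^ M"
      by (rule Taylor[where diff = "\<lambda>m. (deriv ^^ m) \<psi>" and a = "min x0 (x0 + z)" and b = "max x0 (x0 + z)"])
         (use M0 False schwartz_DERIV_funpow[OF \<psi>] in auto)
    then obtain t where t: "\<psi> (x0 + z) = (\<Sum>m<M. ((deriv ^^ m) \<psi> x0 / fact m) * z ^ m) + ((deriv ^^ M) \<psi> t / fact M) * z ^ M"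
      by auto
    have "\<bar>(deriv ^^ M) \<psi> t / fact M * z ^ M\<bar> = \<bar>(deriv ^^ M) \<psi> t\<bar> / fact M * \<bar>z\<bar> ^ M"
      by (simp add: abs_mult power_abs)
    also have "\<dots> \<le> B / fact M * \<bar>z\<bar> ^ M"
      by (intro mult_right_mono divide_right_mono) (use B in auto)
    finally show ?thesis using t by simp
  qed
qed

lemma integrable_mult_rescaled:
  fixes h :: "real \<Rightarrow> real"
  assumes h: "schwartz_upto (Suc 0) h" and \<psi>: "schwartz \<psi>"
  shows "integrable lborel (\<lambda>y. h y * \<psi> (x0 + \<epsilon> * y))"
proof -
  obtain B where "\<forall>x. \<bar>(deriv ^^ 0) \<psi> x\<bar> \<le> B" using schwartz_funpow_bounded[OF \<psi>] by blast
  then have B: "\<bar>\<psi> x\<bar> \<le> B" for x by simp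
  have "continuous_on UNIV (\<lambda>y. \<psi> (x0 + \<epsilon> * y))"
    by (rule continuous_on_compose2[OF schwartz_continuous[OF \<psi>]]) (auto intro!: continuous_intros)
  then have "continuous_on UNIV (\<lambda>y. h y * \<psi> (x0 + \<epsilon> * y))"
    by (intro continuous_intros schwartz_upto_continuous[OF h])
  moreover have "\<bar>h y * \<psi> (x0 + \<epsilon> * y)\<bar> \<le> B * \<bar>h y\<bar>" for y
  proof -
    have "\<bar>h y\<bar> * \<bar>\<psi> (x0 + \<epsilon> * y)\<bar> \<le> \<bar>h y\<bar> * B" using B by (intro mult_left_mono) auto
    then show ?thesis by (simp add: abs_mult mult.commute)
  qed
  ultimately show ?thesis
    by (rule integrable_continuous_dominated[OF schwartz_upto_integrable[OF h]])
qed

lemma integral_mult_rescaled_polynomial: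
  fixes h :: "real \<Rightarrow> real"
  assumes moments: "\<And>j. integrable lborel (\<lambda>y. y ^ j * h y)"
  shows "integrable lborel (\<lambda>y. h y * (\<Sum>j<M. a j * (\<epsilon> * y) ^ j))"
    and "integral\<^sup>L lborel (\<lambda>y. h y * (\<Sum>j<M. a j * (\<epsilon> * y) ^ j))
         = (\<Sum>j<M. a j * integral\<^sup>L lborel (\<lambda>y. y ^ j * h y) * \<epsilon> ^ j)"
proof -
  have expand: "(\<lambda>y. h y * (\<Sum>j<M. a j * (\<epsilon> * y) ^ j)) = (\<lambda>y. \<Sum>j<M. (a j * \<epsilon> ^ j) * (y ^ j * h y))"
    by (rule ext) (simp add: sum_distrib_left power_mult_distrib algebra_simps)
  show "integrable lborel (\<lambda>y. h y * (\<Sum>j<M. a j * (\<epsilon> * y) ^ j))"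
    unfolding expand by (rule Bochner_Integration.integrable_sum) (simp add: moments)
  have "integral\<^sup>L lborel (\<lambda>y. h y * (\<Sum>j<M. a j * (\<epsilon> * y) ^ j))
      = (\<Sum>j<M. integral\<^sup>L lborel (\<lambda>y. (a j * \<epsilon> ^ j) * (y ^ j * h y)))"
    unfolding expand by (rule Bochner_Integration.integral_sum) (use moments in simp)
  also have "\<dots> = (\<Sum>j<M. a j * integral\<^sup>L lborel (\<lambda>y. y ^ j * h y) * \<epsilon> ^ j)"
    by (rule sum.cong) (simp_all add: moments)
  finally show "integral\<^sup>L lborel (\<lambda>y. h y * (\<Sum>j<M. a j * (\<epsilon> * y) ^ j))
      = (\<Sum>j<M. a j * integral\<^sup>L lborel (\<lambda>y. y ^ j * h y) * \<epsilon> ^ j)" .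
qed

lemma integral_rescaled_taylor_expansion:
  fixes h :: "real \<Rightarrow> real"
  assumes h: "schwartz_upto (Suc 0) h" and \<psi>: "schwartz \<psi>"
  shows "\<exists>K. \<forall>\<epsilon>. \<bar>integral\<^sup>L lborel (\<lambda>y. h y * \<psi> (x0 + \<epsilon> * y)) -
      (\<Sum>j<M. (deriv ^^ j) \<psi> x0 / fact j * integral\<^sup>L lborel (\<lambda>y. y ^ j * h y) * \<epsilon> ^ j)\<bar> \<le> K * \<bar>\<epsilon>\<bar> ^ M"
proof -
  obtain B where B: "\<forall>x. \<bar>(deriv ^^ M) \<psi> x\<bar> \<le> B" using schwartz_funpow_bounded[OF \<psi>] by blast
  define a where "a j = (deriv ^^ j) \<psi> x0 / fact j" for j
  define K where "K = B / fact M * integral\<^sup>L lborel (\<lambda>y. \<bar>y ^ M * h y\<bar>)"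
  have ij: "integrable lborel (\<lambda>y. y ^ j * h y)" for j using schwartz_upto_integrable_moment[OF h] .
  show ?thesis
  proof (intro exI allI)
    fix \<epsilon> :: real
    have i1: "integrable lborel (\<lambda>y. h y * \<psi> (x0 + \<epsilon> * y))"
      by (rule integrable_mult_rescaled[OF h \<psi>])
    note ipoly = integral_mult_rescaled_polynomial(1)[OF ij, where a = a and M = M and \<epsilon> = \<epsilon>]
    note intpoly = integral_mult_rescaled_polynomial(2)[OF ij, where a = a and M = M and \<epsilon> = \<epsilon>]
    define R where "R y = \<psi> (x0 + \<epsilon> * y) - (\<Sum>j<M. a j * (\<epsilon> * y) ^ j)" for y
    have hR: "(\<lambda>y. h y * R y) = (\<lambda>y. h y * \<psi> (x0 + \<epsilon> * y) - h y * (\<Sum>j<M. a j * (\<epsilon> * y) ^ j))"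
      by (rule ext) (simp add: R_def algebra_simps)
    have iR: "integrable lborel (\<lambda>y. h y * R y)" unfolding hR using i1 ipoly by simp
    have eqR: "integral\<^sup>L lborel (\<lambda>y. h y * \<psi> (x0 + \<epsilon> * y)) - (\<Sum>j<M. a j * integral\<^sup>L lborel (\<lambda>y. y ^ j * h y) * \<epsilon> ^ j)
        = integral\<^sup>L lborel (\<lambda>y. h y * R y)"
      unfolding hR intpoly[symmetric] using i1 ipoly by simp
    define g where "g y = (B / fact M * \<bar>\<epsilon>\<bar> ^ M) * \<bar>y ^ M * h y\<bar>" for y
    have ig: "integrable lborel g" unfolding g_def using ij[of M] by simp
    have bR: "\<bar>h y * R y\<bar> \<le> g y" for y
    proof -
      have "\<bar>R y\<bar> \<le> B / fact M * \<bar>\<epsilon> * y\<bar> ^ M"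
        unfolding R_def a_def using taylor_remainder_bound[OF \<psi> B, of x0 "\<epsilon> * y"] by simp
      then have "\<bar>h y\<bar> * \<bar>R y\<bar> \<le> \<bar>h y\<bar> * (B / fact M * \<bar>\<epsilon> * y\<bar> ^ M)"
        by (rule mult_left_mono) simp
      then show ?thesis unfolding g_def
        by (simp add: abs_mult power_mult_distrib power_abs algebra_simps)
    qed
    have m1: "integral\<^sup>L lborel (\<lambda>y. h y * R y) \<le> integral\<^sup>L lborel g"
      by (rule integral_mono[OF iR ig]) (use bR in \<open>auto simp: abs_le_iff\<close>)
    have m2: "integral\<^sup>L lborel (\<lambda>y. - (h y * R y)) \<le> integral\<^sup>L lborel g"
      by (rule integral_mono[OF _ ig]) (use bR iR in \<open>auto simp: abs_le_iff\<close>)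
    have "integral\<^sup>L lborel g = K * \<bar>\<epsilon>\<bar> ^ M" unfolding g_def K_def by simp
    then have "\<bar>integral\<^sup>L lborel (\<lambda>y. h y * R y)\<bar> \<le> K * \<bar>\<epsilon>\<bar> ^ M" using m1 m2 by simp
    then show "\<bar>integral\<^sup>L lborel (\<lambda>y. h y * \<psi> (x0 + \<epsilon> * y)) -
      (\<Sum>j<M. (deriv ^^ j) \<psi> x0 / fact j * integral\<^sup>L lborel (\<lambda>y. y ^ j * h y) * \<epsilon> ^ j)\<bar> \<le> K * \<bar>\<epsilon>\<bar> ^ M"
      using eqR unfolding a_def by simp
  qed
qed

lemma sum_powi_eq_sum_power:
  fixes c :: "nat \<Rightarrow> real"
  assumes van: "\<And>j. int j < p \<Longrightarrow> c j = 0" and "0 \<le> N + 1"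
  shows "(\<Sum>k\<in>{p..N}. (if 0 \<le> k then c (nat k) else 0) * \<epsilon> powi k) = (\<Sum>j<nat (N + 1). c j * \<epsilon> ^ j)"
proof -
  define \<xi> where "\<xi> k = (if 0 \<le> k then c (nat k) else 0)" for k :: int
  have "\<forall>k\<in>{min p 0..N} - {p..N}. \<xi> k * \<epsilon> powi k = 0"
    unfolding \<xi>_def using van by force
  then have "(\<Sum>k\<in>{p..N}. \<xi> k * \<epsilon> powi k) = (\<Sum>k\<in>{min p 0..N}. \<xi> k * \<epsilon> powi k)"
    by (intro sum.mono_neutral_left) auto
  also have "\<dots> = (\<Sum>k\<in>{0..N}. \<xi> k * \<epsilon> powi k)"
    by (rule sum.mono_neutral_left[symmetric]) (auto simp: \<xi>_def)
  also have "{0..N} = int ` {..<nat (N + 1)}"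
    using \<open>0 \<le> N + 1\<close> by (auto simp: image_iff intro!: bexI[of _ "nat _"])
  also have "(\<Sum>k\<in>int ` {..<nat (N + 1)}. \<xi> k * \<epsilon> powi k) = (\<Sum>j<nat (N + 1). c j * \<epsilon> ^ j)"
    by (subst sum.reindex) (auto simp: \<xi>_def inj_on_def)
  finally show ?thesis unfolding \<xi>_def .
qed

lemma R_eps_up_to_if_expansion:
  fixes F :: "real \<Rightarrow> real" and c :: "nat \<Rightarrow> real"
  assumes ex: "\<And>M. \<exists>K. \<forall>\<epsilon>. 0 < \<epsilon> \<longrightarrow> \<bar>F \<epsilon> - (\<Sum>j<M. c j * \<epsilon> ^ j)\<bar> \<le> K * \<epsilon> ^ M"
    and van: "\<And>j. int j < p \<Longrightarrow> c j = 0"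
  shows "R_eps_up_to p F"
  unfolding R_eps_up_to_def
proof (intro exI allI)
  define \<xi> where "\<xi> k = (if 0 \<le> k then c (nat k) else 0)" for k :: int
  fix N :: int
  have ev: "eventually (\<lambda>\<epsilon>::real. 0 < \<epsilon> \<and> \<epsilon> < 1) (at_right 0)"
    unfolding eventually_at_right_field by (intro exI[of _ 1]) auto
  show "(\<lambda>\<epsilon>. F \<epsilon> - (\<Sum>k\<in>{p..N}. \<xi> k * \<epsilon> powi k)) \<in> O[at_right 0](\<lambda>\<epsilon>. \<epsilon> powi (N + 1))"
  proof (cases "0 \<le> N + 1")
    case True
    define M where "M = nat (N + 1)"
    obtain K where K: "\<forall>\<epsilon>. 0 < \<epsilon> \<longrightarrow> \<bar>F \<epsilon> - (\<Sum>j<M. c j * \<epsilon> ^ j)\<bar> \<le> K * \<epsilon> ^ M"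
      using ex by blast
    have sums: "(\<Sum>k\<in>{p..N}. \<xi> k * \<epsilon> powi k) = (\<Sum>j<M. c j * \<epsilon> ^ j)" for \<epsilon> :: real
      unfolding \<xi>_def M_def by (rule sum_powi_eq_sum_power[OF van True])
    have pw: "\<epsilon> powi (N + 1) = \<epsilon> ^ M" for \<epsilon> :: real
      unfolding M_def using True by (metis nat_0_le power_int_of_nat)
    show ?thesis
    proof (rule bigoI[where c = K])
      show "\<forall>\<^sub>F \<epsilon> in at_right 0. norm (F \<epsilon> - (\<Sum>k\<in>{p..N}. \<xi> k * \<epsilon> powi k)) \<le> K * norm (\<epsilon> powi (N + 1))"
        using ev
      proof eventually_elim
        case (elim \<epsilon>)
        then show ?case using K sums pw by (simp add: abs_of_pos)
      qed
    qed
  next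
    case False
    obtain K where K: "\<forall>\<epsilon>. 0 < \<epsilon> \<longrightarrow> \<bar>F \<epsilon> - (\<Sum>j<0. c j * \<epsilon> ^ j)\<bar> \<le> K * \<epsilon> ^ 0"
      using ex by blast
    have sums: "(\<Sum>k\<in>{p..N}. \<xi> k * \<epsilon> powi k) = 0" for \<epsilon> :: real
      using False by (intro sum.neutral) (auto simp: \<xi>_def)
    have pw: "1 \<le> \<epsilon> powi (N + 1)" if "0 < \<epsilon>" "\<epsilon> < 1" for \<epsilon> :: real
    proof -
      have "\<epsilon> powi (N + 1) = inverse \<epsilon> ^ nat (- (N + 1))" using False by (simp add: power_int_def)
      moreover have "1 \<le> inverse \<epsilon>" using that by (simp add: one_le_inverse)
      ultimately show ?thesis by (simp add: one_le_power)
    qed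
    show ?thesis
    proof (rule bigoI[where c = "\<bar>K\<bar>"])
      show "\<forall>\<^sub>F \<epsilon> in at_right 0. norm (F \<epsilon> - (\<Sum>k\<in>{p..N}. \<xi> k * \<epsilon> powi k)) \<le> \<bar>K\<bar> * norm (\<epsilon> powi (N + 1))"
        using ev
      proof eventually_elim
        case (elim \<epsilon>)
        then have "\<bar>F \<epsilon>\<bar> \<le> K" using K by simp
        moreover have "\<bar>K\<bar> * 1 \<le> \<bar>K\<bar> * \<bar>\<epsilon> powi (N + 1)\<bar>"
          using pw[of \<epsilon>] elim by (intro mult_left_mono) auto
        ultimately show ?case using sums by simp
      qed
    qed
  qed
qed

lemma funpow_deriv_eq_0_imp_eq_0:
  assumes "schwartz_upto (Suc k) u" "\<forall>x. (deriv ^^ k) u x = 0"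
  shows "u x = 0"
  using assms
proof (induction k arbitrary: u x)
  case 0
  then show ?case by simp
next
  case (Suc k)
  have "\<forall>x. (deriv ^^ k) (deriv u) x = 0"
    using Suc.prems(2) by (simp add: funpow_Suc_right del: funpow.simps)
  then have "deriv u y = 0" for y using Suc.IH[OF schwartz_upto_SucD(3)[OF Suc.prems(1)]] by blast
  then have "\<forall>y. DERIV u y :> 0"
    using DERIV_deriv_everywhere[OF schwartz_upto_SucD(1)[OF Suc.prems(1)]] by metis
  then have const: "u y = u 0" for y by (metis DERIV_isconst_all)
  obtain B where "\<forall>y. \<bar>y ^ 1 * u y\<bar> \<le> B"
    using schwartz_upto_0D[OF schwartz_upto_SucD(2)[OF Suc.prems(1)]] by blast
  then have B: "\<bar>y * u 0\<bar> \<le> B" for y using const by (metis power_one_right)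
  have "u 0 = 0"
  proof (rule ccontr)
    assume "u 0 \<noteq> 0"
    then show False using B[of "(\<bar>B\<bar> + 1) / u 0"] by simp
  qed
  then show ?case using const by simp
qed

lemma small_profile_with_vanishing_moments:
  "\<exists>H. (\<forall>n. schwartz_upto n H) \<and> (\<forall>x. \<bar>H x\<bar> \<le> 1/8) \<and> (\<exists>y. H y \<noteq> 0) \<and>
       (\<forall>k<N. integral\<^sup>L lborel (\<lambda>y. y ^ k * H y) = 0)"
proof -
  define \<Theta> where "\<Theta> = (deriv ^^ N) (\<lambda>x::real. exp (- (x ^ 2)))"
  have S\<Theta>: "schwartz_upto n \<Theta>" for n
    using schwartz_upto_funpow_deriv[of N n] schwartz_upto_gaussian unfolding \<Theta>_def by blast
  obtain B where "\<forall>x. \<bar>x ^ 0 * \<Theta> x\<bar> \<le> B" using schwartz_upto_0D[OF S\<Theta>[of 0]] by blast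
  then have B: "\<bar>\<Theta> x\<bar> \<le> B" for x by simp
  define \<delta> where "\<delta> = 1 / (8 * (\<bar>B\<bar> + 1))"
  have \<delta>: "0 < \<delta>" unfolding \<delta>_def by (simp add: add_pos_nonneg)
  have "schwartz_upto n (\<lambda>x. \<delta> * \<Theta> x)" for n by (rule schwartz_upto_cmult[OF S\<Theta>])
  moreover have "\<bar>\<delta> * \<Theta> x\<bar> \<le> 1/8" for x
  proof -
    have "\<bar>\<delta> * \<Theta> x\<bar> \<le> \<delta> * (\<bar>B\<bar> + 1)"
      using B[of x] \<delta> by (simp add: abs_mult mult_left_mono)
    also have "\<dots> = 1/8" unfolding \<delta>_def by (simp add: add_pos_nonneg)
    finally show ?thesis .
  qed
  moreover obtain y where "\<Theta> y \<noteq> 0"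
    using funpow_deriv_eq_0_imp_eq_0[of N "\<lambda>x. exp (- (x ^ 2))" 0] schwartz_upto_gaussian
    unfolding \<Theta>_def by auto
  moreover have "integral\<^sup>L lborel (\<lambda>y. y ^ k * (\<delta> * \<Theta> y)) = 0" if "k < N" for k
    using moments_funpow_deriv_eq_0[OF allI[OF schwartz_upto_gaussian] that] unfolding \<Theta>_def
    by (simp add: mult.left_commute)
  ultimately show ?thesis using \<delta> by (intro exI[of _ "\<lambda>x. \<delta> * \<Theta> x"]) auto
qed

lemma schwartz_upto_quadratic_root:
  assumes H: "\<forall>n. schwartz_upto n H" and Hb: "\<forall>x. \<bar>H x\<bar> \<le> 1/8"
  shows "schwartz_upto n (\<lambda>x. (1 - sqrt (1 + 4 * H x)) / 2)"
proof -
  define \<phi> where "\<phi> x = (1 - sqrt (1 + 4 * H x)) / 2" for x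
  have pos: "0 < 1 + 4 * H x" for x using Hb[rule_format, of x] by linarith
  have dH: "\<forall>x. H differentiable (at x)" using schwartz_upto_SucD(1) H by blast
  have D\<phi>: "DERIV \<phi> x :> deriv H x * ((-1) * (1 + 4 * H x) powr (-1/2))" for x
  proof -
    have \<phi>_powr: "\<phi> = (\<lambda>x. (1 - (1 + 4 * H x) powr (1/2)) / 2)"
      unfolding \<phi>_def[abs_def] using pos by (simp add: powr_half_sqrt less_imp_le)
    have "DERIV (\<lambda>x. 1 + 4 * H x) x :> 0 + 4 * deriv H x"
      by (intro DERIV_add DERIV_const DERIV_cmult DERIV_deriv_everywhere dH)
    from DERIV_fun_powr[where r = "1/2", OF this pos]
    have "DERIV (\<lambda>x. (1 - (1 + 4 * H x) powr (1/2)) / 2) x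
        :> (0 - 1/2 * (1 + 4 * H x) powr (1/2 - 1) * (0 + 4 * deriv H x)) / 2"
      by (intro DERIV_cdivide DERIV_diff DERIV_const) simp
    then show ?thesis unfolding \<phi>_powr by (simp add: algebra_simps)
  qed
  have "schwartz_upto 0 \<phi>"
  proof (rule schwartz_upto_0I)
    fix m
    obtain B where B: "\<forall>x. \<bar>x ^ m * H x\<bar> \<le> B" using schwartz_upto_0D H by blast
    have "\<bar>x ^ m * \<phi> x\<bar> \<le> 2 * B" for x
    proof -
      have "\<bar>\<phi> x\<bar> \<le> 2 * \<bar>H x\<bar>"
        unfolding \<phi>_def by (rule abs_quadratic_root_le) (use Hb[rule_format, of x] in auto)
      then have "\<bar>x ^ m\<bar> * \<bar>\<phi> x\<bar> \<le> \<bar>x ^ m\<bar> * (2 * \<bar>H x\<bar>)" by (rule mult_left_mono) simp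
      then show ?thesis using B[rule_format, of x] by (simp add: abs_mult)
    qed
    then show "\<exists>B. \<forall>x. \<bar>x ^ m * \<phi> x\<bar> \<le> B" by blast
  qed
  moreover have "schwartz_upto n' (deriv \<phi>)" for n'
  proof -
    have "deriv \<phi> = (\<lambda>x. deriv H x * ((-1) * (1 + 4 * H x) powr (-1/2)))"
      by (rule ext, rule DERIV_imp_deriv, rule D\<phi>)
    then show ?thesis
      using schwartz_upto_mult_bounded_upto[OF schwartz_upto_SucD(3)[OF H[rule_format, of "Suc n'"]]
          bounded_upto_powr_comp[OF H Hb, of n' "-1" "-1/2"]] by simp
  qed
  moreover have "\<forall>x. \<phi> differentiable (at x)" using D\<phi> real_differentiable_def by blast
  ultimately have "schwartz_upto n \<phi>" by (cases n) auto
  then show ?thesis unfolding \<phi>_def .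
qed

lemma quadratic_root_square_sub:
  fixes z :: real
  assumes "-1/4 \<le> z"
  shows "((1 - sqrt (1 + 4 * z)) / 2)\<^sup>2 - (1 - sqrt (1 + 4 * z)) / 2 = z"
proof -
  have "(sqrt (1 + 4 * z))\<^sup>2 = 1 + 4 * z" using assms by simp
  then show ?thesis by (simp add: power2_eq_square field_simps)
qed

lemma integral_square_eq_integral_pos:
  fixes \<phi> H :: "real \<Rightarrow> real"
  assumes S\<phi>: "schwartz_upto (Suc 0) \<phi>" and quad: "\<And>x. (\<phi> x)\<^sup>2 - \<phi> x = H x"
    and "integral\<^sup>L lborel H = 0" and "H y0 \<noteq> 0"
  shows "integral\<^sup>L lborel (\<lambda>x. (\<phi> x)\<^sup>2) = integral\<^sup>L lborel \<phi>" and "0 < integral\<^sup>L lborel \<phi>"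
proof -
  have "schwartz_upto (Suc 0) (\<lambda>x. \<phi> x * \<phi> x)"
    by (rule schwartz_upto_mult_bounded_upto[OF S\<phi> schwartz_upto_imp_bounded_upto[OF S\<phi>]])
  then have S\<phi>sq: "schwartz_upto (Suc 0) (\<lambda>x. (\<phi> x)\<^sup>2)" by (simp only: power2_eq_square)
  have I\<phi>sq: "integrable lborel (\<lambda>x. (\<phi> x)\<^sup>2)" by (rule schwartz_upto_integrable[OF S\<phi>sq])
  have "integral\<^sup>L lborel (\<lambda>x. (\<phi> x)\<^sup>2 - \<phi> x) = 0"
    using \<open>integral\<^sup>L lborel H = 0\<close> by (simp add: quad)
  then show sq: "integral\<^sup>L lborel (\<lambda>x. (\<phi> x)\<^sup>2) = integral\<^sup>L lborel \<phi>"
    using schwartz_upto_integrable[OF S\<phi>] I\<phi>sq by simp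
  have "\<phi> y0 \<noteq> 0" using quad[of y0] \<open>H y0 \<noteq> 0\<close> by auto
  then have "0 < (\<phi> y0)\<^sup>2" by simp
  then show "0 < integral\<^sup>L lborel \<phi>"
    using integral_pos_if_continuous[OF schwartz_upto_continuous[OF S\<phi>sq] _ _ I\<phi>sq] sq by simp
qed

lemma deriv_residual_eq:
  fixes \<phi> g :: "real \<Rightarrow> real"
  assumes d\<phi>: "\<forall>x. \<phi> differentiable (at x)" and dg: "\<forall>x. g differentiable (at x)"
    and eq: "\<And>x. (\<phi> x)\<^sup>2 - 2 * c * \<phi> x = k * g x"
  shows "deriv \<phi> y * (\<phi> y - c) = k / 2 * deriv g y"
proof -
  have D\<phi>: "DERIV \<phi> y :> deriv \<phi> y" by (rule DERIV_deriv_everywhere[OF d\<phi>])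
  have "DERIV (\<lambda>x. (\<phi> x)\<^sup>2 - 2 * c * \<phi> x) y
      :> of_nat 2 * (deriv \<phi> y * (\<phi> y) ^ (2 - Suc 0)) - 2 * c * deriv \<phi> y"
    by (rule DERIV_diff[OF DERIV_power[OF D\<phi>] DERIV_cmult[OF D\<phi>]])
  moreover have "DERIV (\<lambda>x. k * g x) y :> k * deriv g y"
    by (rule DERIV_cmult[OF DERIV_deriv_everywhere[OF dg]])
  ultimately have "of_nat 2 * (deriv \<phi> y * (\<phi> y) ^ (2 - Suc 0)) - 2 * c * deriv \<phi> y = k * deriv g y"
    unfolding eq by (rule DERIV_unique)
  then show ?thesis by (simp add: field_simps)
qed

lemma hopf_profile_exists:
  "\<exists>\<phi> c. (\<forall>n. schwartz_upto n \<phi>) \<and> (\<phi> has_integral 1) UNIV \<and>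
     c = 1/2 * integral UNIV (\<lambda>x. (\<phi> x)\<^sup>2) \<and>
     schwartz_upto (Suc 0) (\<lambda>y. deriv \<phi> y * (\<phi> y - c)) \<and>
     (\<forall>j<N. integral\<^sup>L lborel (\<lambda>y. y ^ j * (deriv \<phi> y * (\<phi> y - c))) = 0)"
proof -
  obtain H y0 where SH: "\<And>n. schwartz_upto n H" and Hb: "\<forall>x. \<bar>H x\<bar> \<le> 1/8"
    and "H y0 \<noteq> 0" and moments: "\<And>k. k < Suc N \<Longrightarrow> integral\<^sup>L lborel (\<lambda>y. y ^ k * H y) = 0"
    using small_profile_with_vanishing_moments[of "Suc N"] by blast
  define \<phi>0 where "\<phi>0 x = (1 - sqrt (1 + 4 * H x)) / 2" for x
  have S\<phi>0: "schwartz_upto n \<phi>0" for n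
    unfolding \<phi>0_def[abs_def] by (rule schwartz_upto_quadratic_root[OF allI[OF SH] Hb])
  have quad: "(\<phi>0 x)\<^sup>2 - \<phi>0 x = H x" for x
    unfolding \<phi>0_def by (rule quadratic_root_square_sub) (use Hb[rule_format, of x] in linarith)
  have "integral\<^sup>L lborel H = 0" using moments[of 0] by simp
  note mass = integral_square_eq_integral_pos[OF S\<phi>0 quad this \<open>H y0 \<noteq> 0\<close>]
  define m where "m = integral\<^sup>L lborel \<phi>0"
  have m: "0 < m" using mass(2) unfolding m_def .
  define \<phi> where "\<phi> x = inverse m * \<phi>0 x" for x
  define c where "c = 1 / (2 * m)"
  have S\<phi>: "schwartz_upto n \<phi>" for n unfolding \<phi>_def[abs_def] by (rule schwartz_upto_cmult[OF S\<phi>0])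
  have int\<phi>: "(\<phi> has_integral 1) UNIV"
    using has_integral_integral_lborel[OF schwartz_upto_integrable[OF S\<phi>]] m
    unfolding \<phi>_def m_def by simp
  have "integral UNIV (\<lambda>x. (\<phi> x)\<^sup>2) = integral\<^sup>L lborel (\<lambda>x. (\<phi> x)\<^sup>2)"
    unfolding \<phi>_def power_mult_distrib
    by (rule integral_lborel, rule integrable_mult_right, rule schwartz_upto_integrable)
      (use schwartz_upto_mult_bounded_upto[OF S\<phi>0 schwartz_upto_imp_bounded_upto[OF S\<phi>0]]
        in \<open>simp add: power2_eq_square\<close>)
  also have "\<dots> = 1 / m"
    using m mass(1) unfolding \<phi>_def power_mult_distrib m_def
    by (simp add: power2_eq_square field_simps)
  finally have c_eq: "c = 1/2 * integral UNIV (\<lambda>x. (\<phi> x)\<^sup>2)" unfolding c_def by simp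
  have "(\<phi> x)\<^sup>2 - 2 * c * \<phi> x = inverse (m\<^sup>2) * H x" for x
    using quad[of x] m unfolding \<phi>_def c_def by (simp add: field_simps power2_eq_square)
  then have residual: "deriv \<phi> y * (\<phi> y - c) = inverse (m\<^sup>2) / 2 * deriv H y" for y
    using deriv_residual_eq schwartz_upto_SucD(1)[OF S\<phi>[of "Suc 0"]] schwartz_upto_SucD(1)[OF SH[of "Suc 0"]]
    by blast
  have Sr: "schwartz_upto (Suc 0) (\<lambda>y. deriv \<phi> y * (\<phi> y - c))"
    unfolding residual
    by (rule schwartz_upto_cmult[OF schwartz_upto_SucD(3)[OF SH[of "Suc (Suc 0)"]]])
  have "\<forall>j<N. integral\<^sup>L lborel (\<lambda>y. y ^ j * (deriv \<phi> y * (\<phi> y - c))) = 0"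
  proof (intro allI impI)
    fix j
    assume "j < N"
    then have "j \<le> Suc N" by simp
    then have "integral\<^sup>L lborel (\<lambda>y. y ^ j * deriv H y) = 0"
      using moments_deriv_eq_0[of H "Suc N" j] SH moments by blast
    moreover have "(\<lambda>y. y ^ j * (deriv \<phi> y * (\<phi> y - c))) = (\<lambda>y. inverse (m\<^sup>2) / 2 * (y ^ j * deriv H y))"
      by (rule ext) (simp only: residual mult_ac)
    ultimately show "integral\<^sup>L lborel (\<lambda>y. y ^ j * (deriv \<phi> y * (\<phi> y - c))) = 0"
      by (simp only: integral_mult_right_zero mult_zero_right)
  qed
  note moments_residual = this
  show ?thesis
    by (rule exI[of _ \<phi>], rule exI[of _ c]) (use S\<phi> int\<phi> c_eq Sr moments_residual in blast)
qed

lemma soliton_residual: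
  fixes \<phi> :: "real \<Rightarrow> real"
  assumes d\<phi>: "\<forall>x. \<phi> differentiable (at x)"
  shows "deriv (\<lambda>s. soliton_v l0 dl c \<phi> s x \<epsilon>) t
           + soliton_v l0 dl c \<phi> t x \<epsilon> * deriv (\<lambda>y. soliton_v l0 dl c \<phi> t y \<epsilon>) x
         = dl * deriv \<phi> ((x - c * t) / \<epsilon>) * (l0 + dl * \<phi> ((x - c * t) / \<epsilon>) - c) / \<epsilon>"
proof (cases "\<epsilon> = 0")
  case True
  then show ?thesis by (simp add: soliton_v_def)
next
  case False
  have D\<phi>: "DERIV \<phi> ((x - c * t) / \<epsilon>) :> deriv \<phi> ((x - c * t) / \<epsilon>)"
    by (rule DERIV_deriv_everywhere[OF d\<phi>])
  have ts: "DERIV (\<lambda>s. (x - c * s) / \<epsilon>) t :> - c / \<epsilon>"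
    using False by (auto intro!: derivative_eq_intros simp: field_simps)
  have "DERIV (\<lambda>s. l0 + dl * \<phi> ((x - c * s) / \<epsilon>)) t
      :> 0 + dl * (deriv \<phi> ((x - c * t) / \<epsilon>) * (- c / \<epsilon>))"
    by (intro DERIV_add DERIV_const DERIV_cmult DERIV_chain2[OF D\<phi> ts])
  then have ds: "deriv (\<lambda>s. soliton_v l0 dl c \<phi> s x \<epsilon>) t = dl * (deriv \<phi> ((x - c * t) / \<epsilon>) * (- c / \<epsilon>))"
    unfolding soliton_v_def by (intro DERIV_imp_deriv) simp
  have ty: "DERIV (\<lambda>y. (y - c * t) / \<epsilon>) x :> 1 / \<epsilon>"
    using False by (auto intro!: derivative_eq_intros simp: field_simps)
  have "DERIV (\<lambda>y. l0 + dl * \<phi> ((y - c * t) / \<epsilon>)) x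
      :> 0 + dl * (deriv \<phi> ((x - c * t) / \<epsilon>) * (1 / \<epsilon>))"
    by (intro DERIV_add DERIV_const DERIV_cmult DERIV_chain2[OF D\<phi> ty])
  then have dy: "deriv (\<lambda>y. soliton_v l0 dl c \<phi> t y \<epsilon>) x = dl * (deriv \<phi> ((x - c * t) / \<epsilon>) * (1 / \<epsilon>))"
    unfolding soliton_v_def by (intro DERIV_imp_deriv) simp
  show ?thesis
    unfolding ds dy unfolding soliton_v_def using False by (simp add: field_simps)
qed

lemma integral_rescaled:
  fixes h :: "real \<Rightarrow> real"
  assumes h: "schwartz_upto (Suc 0) h" and \<psi>: "schwartz \<psi>" and \<epsilon>: "0 < \<epsilon>"
  shows "integral UNIV (\<lambda>x. h ((x - x0) / \<epsilon>) / \<epsilon> * \<psi> x)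
       = integral\<^sup>L lborel (\<lambda>y. h y * \<psi> (x0 + \<epsilon> * y))"
proof -
  define f where "f x = h ((x - x0) / \<epsilon>) / \<epsilon> * \<psi> x" for x
  have f_affine: "f (x0 + \<epsilon> * y) = h y * \<psi> (x0 + \<epsilon> * y) / \<epsilon>" for y
    unfolding f_def using \<epsilon> by simp
  have "integrable lborel f"
    using integrable_mult_rescaled[OF h \<psi>] lborel_integrable_real_affine_iff[of \<epsilon> f x0] \<epsilon>
    unfolding f_affine by simp
  then have "integral UNIV f = integral\<^sup>L lborel f" by (rule integral_lborel)
  also have "\<dots> = \<epsilon> * integral\<^sup>L lborel (\<lambda>y. f (x0 + \<epsilon> * y))"
    using lborel_integral_real_affine[of \<epsilon> f x0] \<epsilon> by simp
  also have "\<dots> = integral\<^sup>L lborel (\<lambda>y. h y * \<psi> (x0 + \<epsilon> * y))"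
    unfolding f_affine using \<epsilon> by simp
  finally show ?thesis unfolding f_def .
qed

lemma R_eps_up_to_rescaled_pairing:
  fixes h :: "real \<Rightarrow> real"
  assumes h: "schwartz_upto (Suc 0) h" and \<psi>: "schwartz \<psi>"
    and moments: "\<And>j. int j < p \<Longrightarrow> integral\<^sup>L lborel (\<lambda>y. y ^ j * h y) = 0"
  shows "R_eps_up_to p (\<lambda>\<epsilon>. integral UNIV (\<lambda>x. h ((x - x0) / \<epsilon>) / \<epsilon> * \<psi> x))"
proof (rule R_eps_up_to_if_expansion)
  let ?a = "\<lambda>j. (deriv ^^ j) \<psi> x0 / fact j * integral\<^sup>L lborel (\<lambda>y. y ^ j * h y)"
  fix M
  obtain K where K: "\<forall>\<epsilon>. \<bar>integral\<^sup>L lborel (\<lambda>y. h y * \<psi> (x0 + \<epsilon> * y)) - (\<Sum>j<M. ?a j * \<epsilon> ^ j)\<bar>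
      \<le> K * \<bar>\<epsilon>\<bar> ^ M"
    using integral_rescaled_taylor_expansion[OF h \<psi>] by blast
  have "\<bar>integral UNIV (\<lambda>x. h ((x - x0) / \<epsilon>) / \<epsilon> * \<psi> x) - (\<Sum>j<M. ?a j * \<epsilon> ^ j)\<bar>
      \<le> K * \<epsilon> ^ M" if "0 < \<epsilon>" for \<epsilon>
    using K[rule_format, of \<epsilon>] integral_rescaled[OF h \<psi> that] that by simp
  then show "\<exists>K. \<forall>\<epsilon>>0. \<bar>integral UNIV (\<lambda>x. h ((x - x0) / \<epsilon>) / \<epsilon> * \<psi> x) - (\<Sum>j<M. ?a j * \<epsilon> ^ j)\<bar>
      \<le> K * \<epsilon> ^ M"
    by blast
next
  fix j :: nat
  assume "int j < p"
  then show "(deriv ^^ j) \<psi> x0 / fact j * integral\<^sup>L lborel (\<lambda>y. y ^ j * h y) = 0"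
    using moments by simp
qed

theorem theorem2:
  fixes T :: real and p :: int
  assumes "T > 0"
  shows "\<exists>l0 dl c \<phi>. dl \<noteq> 0 \<and> schwartz \<phi> \<and> (\<phi> has_integral 1) UNIV \<and>
     (\<forall>t \<in> {0..T}. \<forall>\<psi>. schwartz \<psi> \<longrightarrow>
        R_eps_up_to p (\<lambda>\<epsilon>. integral UNIV (\<lambda>x.
           (deriv (\<lambda>s. soliton_v l0 dl c \<phi> s x \<epsilon>) t
            + soliton_v l0 dl c \<phi> t x \<epsilon> * deriv (\<lambda>y. soliton_v l0 dl c \<phi> t y \<epsilon>) x)
           * \<psi> x))) \<and>
     (c - l0) / dl = 1/2 * integral UNIV (\<lambda>x. (\<phi> x)\<^sup>2)"
proof -
  obtain \<phi> c where S\<phi>: "\<forall>n. schwartz_upto n \<phi>" and "(\<phi> has_integral 1) UNIV"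
    and c: "c = 1/2 * integral UNIV (\<lambda>x. (\<phi> x)\<^sup>2)"
    and Sr: "schwartz_upto (Suc 0) (\<lambda>y. deriv \<phi> y * (\<phi> y - c))"
    and moments: "\<forall>j<nat p. integral\<^sup>L lborel (\<lambda>y. y ^ j * (deriv \<phi> y * (\<phi> y - c))) = 0"
    using hopf_profile_exists by blast
  have d\<phi>: "\<forall>x. \<phi> differentiable (at x)" using schwartz_upto_SucD(1) S\<phi> by blast
  have "R_eps_up_to p (\<lambda>\<epsilon>. integral UNIV (\<lambda>x.
           (deriv (\<lambda>s. soliton_v 0 1 c \<phi> s x \<epsilon>) t
            + soliton_v 0 1 c \<phi> t x \<epsilon> * deriv (\<lambda>y. soliton_v 0 1 c \<phi> t y \<epsilon>) x) * \<psi> x))"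
    if \<psi>: "schwartz \<psi>" for t \<psi>
    using R_eps_up_to_rescaled_pairing[OF Sr \<psi>, of p "c * t"] moments
    by (simp add: soliton_residual[OF d\<phi>])
  note pairing = this
  have speed_eq: "(c - 0) / 1 = 1/2 * integral UNIV (\<lambda>x. (\<phi> x)\<^sup>2)" using c by simp
  show ?thesis
    by (rule exI[of _ 0], rule exI[of _ 1], rule exI[of _ c], rule exI[of _ \<phi>])
      (use pairing speed_eq \<open>(\<phi> has_integral 1) UNIV\<close> schwartz_if_schwartz_upto_all[OF S\<phi>] in auto)
qed

end
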